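(* Let $N\ge1$, $\Delta w>0$, $\Delta t>0$. For $i=0,\dots,N-1$ let $D_{i+1/2}>0$ and let $\tilde{\mathcal C}^n_{i+1/2}\in\mathbb{R}$ be arbitrary (in applications they are computed from $f^n$). Define $\lambda^n_{i+1/2}=\Delta w\,\tilde{\mathcal C}^n_{i+1/2}/D_{i+1/2}$, $\delta^n_{i+1/2}=\frac{1}{\lambda^n_{i+1/2}}+\frac{1}{1-e^{\lambda^n_{i+1/2}}}$ (with $\delta^n_{i+1/2}=1/2$ if $\lambda^n_{i+1/2}=0$), $$\mathcal F^n_{i+1/2}=\tilde{\mathcal C}^n_{i+1/2}\big[(1-\delta^n_{i+1/2})f^n_{i+1}+\delta^n_{i+1/2}f^n_i\big]+D_{i+1/2}\frac{f^n_{i+1}-f^n_i}{\Delta w},\quad i=0,\dots,N-1,$$ and $\mathcal F^n_{-1/2}=\mathcal F^n_{N+1/2}=0$. Consider the explicit (forward Euler) scheme $$f_i^{n+1}=f_i^n+\Delta t\,\frac{\mathcal F^n_{i+1/2}-\mathcal F^n_{i-1/2}}{\Delta w},\qquad i=0,\dots,N.$$ Let $M=\max_i|\tilde{\mathcal C}^n_{i+1/2}|$ and $D=\max_i D_{i+1/2}$. If $$\Delta t\le\frac{\Delta w^2}{2(M\Delta w+D)},$$ then $f_i^n\ge0$ for all $i$ implies $f_i^{n+1}\ge 0$ for all $i=0,\dots,N$.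
   Context: This is the Chang–Cooper type (SP-CC) discretization of the 1D Fokker–Planck equation $\partial_t f=\partial_w[(\mathcal B[f]+D')f+D\partial_w f]$ on a uniform grid with no-flux boundary conditions; in the paper $\tilde{\mathcal C}^n_{i+1/2}=\frac{D_{i+1/2}}{\Delta w}\int_{w_i}^{w_{i+1}}\frac{\mathcal B[f^n](w)+D'(w)}{D(w)}dw$ (or a quadrature of it), but the claim holds for arbitrary real values. *)

theory Defs
  imports Complex_Main
begin

definition cc_delta :: "real \<Rightarrow> real" where
  "cc_delta lam = (if lam = 0 then 1/2 else 1 / lam + 1 / (1 - exp lam))"

text \<open>Interior flux F_{i+1/2}, for i = 0..N-1. C i and Dh i stand for the values at i+1/2.\<close>
definition cc_flux_int :: "real \<Rightarrow> (nat \<Rightarrow> real) \<Rightarrow> (nat \<Rightarrow> real) \<Rightarrow> (nat \<Rightarrow> real) \<Rightarrow> nat \<Rightarrow> real" where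
  "cc_flux_int dw C Dh f i =
     (let lam = dw * C i / Dh i; del = cc_delta lam in
      C i * ((1 - del) * f (Suc i) + del * f i) + Dh i * (f (Suc i) - f i) / dw)"

text \<open>Shifted flux index: cc_flux N dw C Dh f k = F_{k-1/2}, for k = 0..N+1,
  with the no-flux boundary values F_{-1/2} = F_{N+1/2} = 0.\<close>
definition cc_flux :: "nat \<Rightarrow> real \<Rightarrow> (nat \<Rightarrow> real) \<Rightarrow> (nat \<Rightarrow> real) \<Rightarrow> (nat \<Rightarrow> real) \<Rightarrow> nat \<Rightarrow> real" where
  "cc_flux N dw C Dh f k = (if k = 0 \<or> k \<ge> N + 1 then 0 else cc_flux_int dw C Dh f (k - 1))"

definition cc_step :: "nat \<Rightarrow> real \<Rightarrow> real \<Rightarrow> (nat \<Rightarrow> real) \<Rightarrow> (nat \<Rightarrow> real) \<Rightarrow> (nat \<Rightarrow> real) \<Rightarrow> nat \<Rightarrow> real" where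
  "cc_step N dw dt C Dh f i = f i + dt * (cc_flux N dw C Dh f (Suc i) - cc_flux N dw C Dh f i) / dw"

end

theory Submission imports Defs begin

text \<open>Writing \<open>\<lambda> = \<Delta>w C/D\<close>, the Chang--Cooper flux is \<open>F\<^sub>i\<^sub>+\<^sub>1\<^sub>/\<^sub>2 = a f\<^sub>i\<^sub>+\<^sub>1 - b f\<^sub>i\<close> with
  \<open>b = (D/\<Delta>w)(1 - \<lambda>\<delta>(\<lambda>)) = (D/\<Delta>w) \<lambda>/(e\<^sup>\<lambda> - 1)\<close> and \<open>a = (D/\<Delta>w)(1 + \<lambda>(1 - \<delta>(\<lambda>)))\<close>,
  the same expression at \<open>-\<lambda>\<close>. Both are nonnegative, and since \<open>0 \<le> \<delta> \<le> 1\<close> both are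
  at most \<open>K = |C| + D/\<Delta>w\<close>. Hence, for nonnegative data, the flux leaving cell \<open>i\<close> through
  either face is at most \<open>K f\<^sub>i\<close>, and \<open>f\<^sub>i\<^sup>n\<^sup>+\<^sup>1 \<ge> (1 - 2K \<Delta>t/\<Delta>w) f\<^sub>i\<close>, which is
  nonnegative under the CFL condition.\<close>

lemma cc_delta_eq:
  assumes "l \<noteq> 0"
  shows "cc_delta l = (exp l - 1 - l) / (l * (exp l - 1))"
proof -
  have "exp l \<noteq> 1" using assms by simp
  then show ?thesis using assms unfolding cc_delta_def by (simp add: field_simps)
qed

lemma cc_delta_minus: "cc_delta (- l) = 1 - cc_delta l"
proof (cases "l = 0")
  case False
  then have "exp l \<noteq> 1" by simp
  then show ?thesis using False unfolding cc_delta_def by (simp add: exp_minus field_simps)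
qed (simp add: cc_delta_def)

lemma mult_exp_minus_one_pos:
  fixes l :: real
  assumes "l \<noteq> 0"
  shows "0 < l * (exp l - 1)"
proof (cases "l > 0")
  case False
  with assms have "l < 0" by linarith
  then show ?thesis by (simp add: mult_neg_neg)
qed simp

lemma cc_delta_nonneg: "0 \<le> cc_delta l"
proof (cases "l = 0")
  case False
  have "0 \<le> exp l - 1 - l" using exp_ge_add_one_self[of l] by linarith
  then show ?thesis
    using mult_exp_minus_one_pos[OF False] by (simp add: cc_delta_eq[OF False])
qed (simp add: cc_delta_def)

lemma cc_delta_le_one: "cc_delta l \<le> 1"
  using cc_delta_nonneg[of "- l"] by (simp add: cc_delta_minus)

lemma one_minus_mult_cc_delta_nonneg: "0 \<le> 1 - l * cc_delta l"
proof (cases "l = 0")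
  case False
  then have "exp l \<noteq> 1" by simp
  with False have "1 - l * cc_delta l = l / (exp l - 1)"
    by (simp add: cc_delta_eq field_simps)
  also have "\<dots> = l * l / (l * (exp l - 1))" using False by simp
  also have "0 \<le> \<dots>"
    using mult_exp_minus_one_pos[OF False] by (intro divide_nonneg_pos) simp_all
  finally show ?thesis .
qed (simp add: cc_delta_def)

lemma one_plus_mult_cc_delta_nonneg: "0 \<le> 1 + l * (1 - cc_delta l)"
  using one_minus_mult_cc_delta_nonneg[of "- l"] by (simp add: cc_delta_minus)

definition cc_coeff_right :: "real \<Rightarrow> real \<Rightarrow> real \<Rightarrow> real" where
  "cc_coeff_right dw c d = c * (1 - cc_delta (dw * c / d)) + d / dw"

definition cc_coeff_left :: "real \<Rightarrow> real \<Rightarrow> real \<Rightarrow> real" where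
  "cc_coeff_left dw c d = d / dw - c * cc_delta (dw * c / d)"

lemma cc_flux_int_eq:
  "cc_flux_int dw C Dh f i =
     cc_coeff_right dw (C i) (Dh i) * f (Suc i) - cc_coeff_left dw (C i) (Dh i) * f i"
  unfolding cc_flux_int_def cc_coeff_right_def cc_coeff_left_def Let_def
  by (simp add: algebra_simps diff_divide_distrib)

lemma cc_coeff_right_nonneg:
  assumes "dw > 0" "d > 0"
  shows "0 \<le> cc_coeff_right dw c d"
proof -
  define l where "l = dw * c / d"
  have "cc_coeff_right dw c d = d / dw * (1 + l * (1 - cc_delta l))"
    using assms unfolding cc_coeff_right_def l_def by (simp add: field_simps)
  then show ?thesis using assms one_plus_mult_cc_delta_nonneg by simp
qed

lemma cc_coeff_left_nonneg:
  assumes "dw > 0" "d > 0"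
  shows "0 \<le> cc_coeff_left dw c d"
proof -
  define l where "l = dw * c / d"
  have "cc_coeff_left dw c d = d / dw * (1 - l * cc_delta l)"
    using assms unfolding cc_coeff_left_def l_def by (simp add: field_simps)
  then show ?thesis using assms one_minus_mult_cc_delta_nonneg by simp
qed

lemma abs_mult_le_abs: "0 \<le> (t :: real) \<Longrightarrow> t \<le> 1 \<Longrightarrow> \<bar>c * t\<bar> \<le> \<bar>c\<bar>"
  using mult_left_le[of t "\<bar>c\<bar>"] by (simp add: abs_mult)

lemma cc_coeff_right_le: "cc_coeff_right dw c d \<le> \<bar>c\<bar> + d / dw"
  using abs_mult_le_abs[of "1 - cc_delta (dw * c / d)" c] cc_delta_nonneg cc_delta_le_one
  unfolding cc_coeff_right_def by (simp add: abs_le_iff)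

lemma cc_coeff_left_le: "cc_coeff_left dw c d \<le> \<bar>c\<bar> + d / dw"
  using abs_mult_le_abs[of "cc_delta (dw * c / d)" c] cc_delta_nonneg cc_delta_le_one
  unfolding cc_coeff_left_def by (simp add: abs_le_iff)

lemma cc_flux_int_ge:
  assumes "dw > 0" "Dh i > 0" "f (Suc i) \<ge> 0" "f i \<ge> 0"
  shows "- ((\<bar>C i\<bar> + Dh i / dw) * f i) \<le> cc_flux_int dw C Dh f i"
proof -
  have "cc_coeff_left dw (C i) (Dh i) * f i \<le> (\<bar>C i\<bar> + Dh i / dw) * f i"
    using cc_coeff_left_le assms(4) by (rule mult_right_mono)
  then have "- ((\<bar>C i\<bar> + Dh i / dw) * f i) \<le> - (cc_coeff_left dw (C i) (Dh i) * f i)"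
    by linarith
  also have "\<dots> \<le> cc_flux_int dw C Dh f i"
    using cc_coeff_right_nonneg[OF assms(1,2)] assms(3) by (simp add: cc_flux_int_eq)
  finally show ?thesis .
qed

lemma cc_flux_int_le:
  assumes "dw > 0" "Dh i > 0" "f (Suc i) \<ge> 0" "f i \<ge> 0"
  shows "cc_flux_int dw C Dh f i \<le> (\<bar>C i\<bar> + Dh i / dw) * f (Suc i)"
proof -
  have "cc_flux_int dw C Dh f i \<le> cc_coeff_right dw (C i) (Dh i) * f (Suc i)"
    using cc_coeff_left_nonneg[OF assms(1,2)] assms(4) by (simp add: cc_flux_int_eq)
  also have "\<dots> \<le> (\<bar>C i\<bar> + Dh i / dw) * f (Suc i)"
    using cc_coeff_right_le assms(3) by (simp add: mult_right_mono)
  finally show ?thesis .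
qed

locale cc_coeff_bounded =
  fixes N :: nat and dw K :: real and C Dh f :: "nat \<Rightarrow> real"
  assumes dw_pos: "dw > 0" and K_nonneg: "K \<ge> 0"
    and Dh_pos: "\<And>i. i < N \<Longrightarrow> Dh i > 0"
    and coeff_bound: "\<And>i. i < N \<Longrightarrow> \<bar>C i\<bar> + Dh i / dw \<le> K"
    and f_nonneg: "\<And>i. i \<le> N \<Longrightarrow> f i \<ge> 0"
begin

lemma cc_flux_Suc_ge:
  assumes "i \<le> N"
  shows "- (K * f i) \<le> cc_flux N dw C Dh f (Suc i)"
proof (cases "i < N")
  case True
  have "(\<bar>C i\<bar> + Dh i / dw) * f i \<le> K * f i"
    using coeff_bound[OF True] f_nonneg[OF assms] by (rule mult_right_mono)
  then have "- (K * f i) \<le> - ((\<bar>C i\<bar> + Dh i / dw) * f i)"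
    by linarith
  also have "\<dots> \<le> cc_flux_int dw C Dh f i"
    using True by (intro cc_flux_int_ge dw_pos Dh_pos f_nonneg) simp_all
  finally show ?thesis using True by (simp add: cc_flux_def)
qed (use assms K_nonneg f_nonneg in \<open>simp add: cc_flux_def\<close>)

lemma cc_flux_le:
  assumes "i \<le> N"
  shows "cc_flux N dw C Dh f i \<le> K * f i"
proof (cases i)
  case (Suc j)
  then have j: "j < N" using assms by simp
  have "cc_flux_int dw C Dh f j \<le> (\<bar>C j\<bar> + Dh j / dw) * f (Suc j)"
    using j by (intro cc_flux_int_le dw_pos Dh_pos f_nonneg) simp_all
  also have "\<dots> \<le> K * f (Suc j)"
    using coeff_bound[OF j] f_nonneg[of "Suc j"] j by (simp add: mult_right_mono)
  finally show ?thesis using Suc j by (simp add: cc_flux_def)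
qed (use K_nonneg f_nonneg in \<open>simp add: cc_flux_def\<close>)

lemma cc_step_nonneg:
  assumes "0 \<le> dt" "2 * K * dt \<le> dw" "i \<le> N"
  shows "0 \<le> cc_step N dw dt C Dh f i"
proof -
  let ?dF = "cc_flux N dw C Dh f (Suc i) - cc_flux N dw C Dh f i"
  have "- (2 * K * f i) \<le> ?dF"
    using cc_flux_Suc_ge[OF assms(3)] cc_flux_le[OF assms(3)] by linarith
  from mult_left_mono[OF this assms(1)] have "- (2 * K * dt * f i) \<le> dt * ?dF"
    by (simp add: algebra_simps)
  then have "f i - 2 * K * dt * f i / dw \<le> cc_step N dw dt C Dh f i"
    unfolding cc_step_def using divide_right_mono[OF _ less_imp_le[OF dw_pos]] by fastforce
  moreover have "2 * K * dt * f i / dw \<le> f i"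
    using mult_right_mono[OF assms(2) f_nonneg[OF assms(3)]] dw_pos by (simp add: field_simps)
  ultimately show ?thesis by simp
qed

end

theorem mainTheorem3:
  fixes N :: nat and dw dt :: real and C Dh f :: "nat \<Rightarrow> real"
  assumes "N \<ge> 1" and "dw > 0" and "dt > 0"
    and "\<And>i. i < N \<Longrightarrow> Dh i > 0"
    and "dt \<le> dw ^ 2 / (2 * (Max ((\<lambda>i. \<bar>C i\<bar>) ` {..<N}) * dw + Max (Dh ` {..<N})))"
    and "\<And>i. i \<le> N \<Longrightarrow> f i \<ge> 0"
  shows "\<forall>i \<le> N. cc_step N dw dt C Dh f i \<ge> 0"
proof -
  define Mc where "Mc = Max ((\<lambda>i. \<bar>C i\<bar>) ` {..<N})"
  define Md where "Md = Max (Dh ` {..<N})"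
  have Mc_ge: "\<bar>C i\<bar> \<le> Mc" and Md_ge: "Dh i \<le> Md" if "i < N" for i
    using that unfolding Mc_def Md_def by (auto intro: Max_ge)
  have N_pos: "0 < N" using assms(1) by simp
  have Mc_nonneg: "0 \<le> Mc" using abs_ge_zero order_trans Mc_ge[OF N_pos] by blast
  have Md_pos: "0 < Md" using assms(4)[OF N_pos] Md_ge[OF N_pos] by linarith
  have "0 < Mc * dw + Md"
    using Mc_nonneg Md_pos assms(2) by (intro add_nonneg_pos mult_nonneg_nonneg) simp_all
  then have cfl: "2 * (Mc + Md / dw) * dt \<le> dw"
    using assms(2,5) unfolding Mc_def[symmetric] Md_def[symmetric]
    by (simp add: le_divide_eq field_simps power2_eq_square)
  interpret cc_coeff_bounded N dw "Mc + Md / dw" C Dh f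
  proof
    show "0 \<le> Mc + Md / dw"
      using Mc_nonneg Md_pos assms(2) by simp
    show "\<bar>C i\<bar> + Dh i / dw \<le> Mc + Md / dw" if "i < N" for i
      using Mc_ge[OF that] Md_ge[OF that] assms(2) by (simp add: add_mono divide_right_mono)
  qed (use assms in auto)
  show ?thesis using cc_step_nonneg[OF _ cfl] assms(3) by simp
qed

end
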